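(* Let $k$ be a field, $(X,\leq)$ a locally finite preordered set and $C=IC(X)$. For any $v\in X$, $S_v^*\simeq S'_v$ as right $C^*$-modules.
   Context: $(X,\leq)$ is a reflexive transitive relation with all intervals $[x,y]$ finite. $IC(X)$ has $k$-basis $\{e_{x,y}\mid x\leq y\}$, $\Delta(e_{x,y})=\sum_{x\leq z\leq y}e_{x,z}\otimes e_{z,y}$, $\varepsilon(e_{x,y})=\delta_{x,y}$. $x\sim y$ means $x\leq y$ and $y\leq x$. For $v\in X$ with $\sim$-class $\mathcal C$: $S_v=\sum_{y\in\mathcal C}k e_{v,y}$ (a simple right $C$-subcomodule of $C$) and $S'_v=\sum_{y\in\mathcal C}k e_{y,v}$ (a simple left $C$-subcomodule of $C$). $C^*$ is the dual algebra with convolution product $(fg)(c)=\sum f(c_1)g(c_2)$; $C$ is a left $C^*$-module via $c^*\rightharpoonup c=\sum c_1c^*(c_2)$ and a right $C^*$-module via $c\leftharpoonup c^*=\sum c^*(c_1)c_2$. $S_v$ is a left $C^*$-submodule, so $S_v^*$ is a right $C^*$-module via $(f\leftharpoonup c^* )(s)=f(c^*\rightharpoonup s)$; $S'_v$ is a right $C^*$-submodule of $C$. *)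

theory Defs
  imports Main
begin

text \<open>Elements of the incidence coalgebra
C = IC(X) over the field 'k are finitely supported coefficient functions
c :: 'a \<times> 'a \<Rightarrow> 'k with c(x,y) the coefficient of e_{x,y}
(support contained in pairs x \<le> y).\<close>

definition locally_finite_preorder :: "('a \<Rightarrow> 'a \<Rightarrow> bool) \<Rightarrow> bool" where
  "locally_finite_preorder le \<longleftrightarrow>
     reflp le \<and> transp le \<and> (\<forall>x y. finite {z. le x z \<and> le z y})"

definition pre_equiv :: "('a \<Rightarrow> 'a \<Rightarrow> bool) \<Rightarrow> 'a \<Rightarrow> 'a \<Rightarrow> bool" where
  "pre_equiv le x y \<longleftrightarrow> le x y \<and> le y x"

definition interval :: "('a \<Rightarrow> 'a \<Rightarrow> bool) \<Rightarrow> 'a \<Rightarrow> 'a \<Rightarrow> 'a set" where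
  "interval le x y = {z. le x z \<and> le z y}"

definition supp :: "('b \<Rightarrow> 'k::zero) \<Rightarrow> 'b set" where
  "supp c = {p. c p \<noteq> 0}"

definition IC :: "('a \<Rightarrow> 'a \<Rightarrow> bool) \<Rightarrow> ('a \<times> 'a \<Rightarrow> 'k::field) set" where
  "IC le = {c. finite (supp c) \<and> (\<forall>x y. c (x, y) \<noteq> 0 \<longrightarrow> le x y)}"

definition ebasis :: "'a \<Rightarrow> 'a \<Rightarrow> ('a \<times> 'a \<Rightarrow> 'k::field)" where
  "ebasis x y = (\<lambda>p. if p = (x, y) then 1 else 0)"

definition lin_on :: "('b \<Rightarrow> 'k::field) set \<Rightarrow> (('b \<Rightarrow> 'k) \<Rightarrow> 'k) \<Rightarrow> bool" where
  "lin_on A f \<longleftrightarrow> (\<forall>c\<in>A. \<forall>d\<in>A. \<forall>a b. f (\<lambda>p. a * c p + b * d p) = a * f c + b * f d)"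

definition IC_dual :: "('a \<Rightarrow> 'a \<Rightarrow> bool) \<Rightarrow> (('a \<times> 'a \<Rightarrow> 'k::field) \<Rightarrow> 'k) set" where
  "IC_dual le = {\<phi>. lin_on (IC le) \<phi>}"

text \<open>Left action c^* \<rightharpoonup> c = sum c_1 c^*(c_2), with
Delta(e_{x,y}) = sum_{x<=z<=y} e_{x,z} (x) e_{z,y}, extended linearly.\<close>
definition left_act :: "('a \<Rightarrow> 'a \<Rightarrow> bool) \<Rightarrow> (('a \<times> 'a \<Rightarrow> 'k::field) \<Rightarrow> 'k)
    \<Rightarrow> ('a \<times> 'a \<Rightarrow> 'k) \<Rightarrow> ('a \<times> 'a \<Rightarrow> 'k)" where
  "left_act le \<phi> c = (\<lambda>q. \<Sum>p\<in>supp c. \<Sum>z\<in>interval le (fst p) (snd p).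
      c p * \<phi> (ebasis z (snd p)) * ebasis (fst p) z q)"

text \<open>Right action c \<leftharpoonup> c^* = sum c^*(c_1) c_2.\<close>
definition right_act :: "('a \<Rightarrow> 'a \<Rightarrow> bool) \<Rightarrow> ('a \<times> 'a \<Rightarrow> 'k::field)
    \<Rightarrow> (('a \<times> 'a \<Rightarrow> 'k) \<Rightarrow> 'k) \<Rightarrow> ('a \<times> 'a \<Rightarrow> 'k)" where
  "right_act le c \<phi> = (\<lambda>q. \<Sum>p\<in>supp c. \<Sum>z\<in>interval le (fst p) (snd p).
      c p * \<phi> (ebasis (fst p) z) * ebasis z (snd p) q)"

text \<open>S_v = span{e_{v,y} | y ~ v}, S'_v = span{e_{y,v} | y ~ v}.\<close>
definition S_sub :: "('a \<Rightarrow> 'a \<Rightarrow> bool) \<Rightarrow> 'a \<Rightarrow> ('a \<times> 'a \<Rightarrow> 'k::field) set" where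
  "S_sub le v = {c \<in> IC le. \<forall>p. c p \<noteq> 0 \<longrightarrow> fst p = v \<and> pre_equiv le (snd p) v}"

definition S'_sub :: "('a \<Rightarrow> 'a \<Rightarrow> bool) \<Rightarrow> 'a \<Rightarrow> ('a \<times> 'a \<Rightarrow> 'k::field) set" where
  "S'_sub le v = {c \<in> IC le. \<forall>p. c p \<noteq> 0 \<longrightarrow> snd p = v \<and> pre_equiv le (fst p) v}"

text \<open>S_v^*: linear functionals on S_v (extensional: zero off S_v).\<close>
definition S_dual :: "('a \<Rightarrow> 'a \<Rightarrow> bool) \<Rightarrow> 'a \<Rightarrow> (('a \<times> 'a \<Rightarrow> 'k::field) \<Rightarrow> 'k) set" where
  "S_dual le v = {f. lin_on (S_sub le v) f \<and> (\<forall>c. c \<notin> S_sub le v \<longrightarrow> f c = 0)}"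

definition dual_right_act :: "('a \<Rightarrow> 'a \<Rightarrow> bool) \<Rightarrow> 'a \<Rightarrow> (('a \<times> 'a \<Rightarrow> 'k::field) \<Rightarrow> 'k)
    \<Rightarrow> (('a \<times> 'a \<Rightarrow> 'k) \<Rightarrow> 'k) \<Rightarrow> (('a \<times> 'a \<Rightarrow> 'k) \<Rightarrow> 'k)" where
  "dual_right_act le v f \<phi> = (\<lambda>s. if s \<in> S_sub le v then f (left_act le \<phi> s) else 0)"

end

theory Submission
  imports Defs
begin

text \<open>The ~-class K of v is finite and the e_{v,y}, y \<in> K, form a basis of S_v, so a functional
f on S_v is determined by the values f(e_{v,y}), and f \<mapsto> \<Sum>_{y\<in>K} f(e_{v,y}) e_{y,v} is a linear
bijection onto S'_v. It is C^*-linear because for z ~ v the interval [v,z] is {y \<in> K. y \<le> z}: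
hence (f \<leftharpoonup> c^*)(e_{v,z}) and the e_{z,v}-coefficient of the image of f under \<leftharpoonup> c^* both
equal \<Sum>_{y\<in>K, y\<le>z} c^*(e_{y,z}) f(e_{v,y}).\<close>

lemma finite_pre_equiv_class:
  assumes "locally_finite_preorder le"
  shows "finite {y. pre_equiv le y v}"
proof (rule finite_subset)
  show "{y. pre_equiv le y v} \<subseteq> {z. le v z \<and> le z v}" by (auto simp: pre_equiv_def)
  show "finite {z. le v z \<and> le z v}" using assms by (simp add: locally_finite_preorder_def)
qed

lemma interval_eq_pre_equiv_class:
  assumes "locally_finite_preorder le" "pre_equiv le z v"
  shows "interval le v z = {y. pre_equiv le y v \<and> le y z}"
  using assms unfolding locally_finite_preorder_def interval_def pre_equiv_def
  by (auto dest: transpD)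

lemma S_sub_lincomb:
  assumes "c \<in> S_sub le v" "d \<in> S_sub le v"
  shows "(\<lambda>p. a * c p + b * d p) \<in> S_sub le v"
proof -
  have "supp (\<lambda>p. a * c p + b * d p) \<subseteq> supp c \<union> supp d"
    by (auto simp: supp_def)
  moreover have "finite (supp c)" "finite (supp d)"
    using assms by (auto simp: S_sub_def IC_def)
  ultimately have "finite (supp (\<lambda>p. a * c p + b * d p))"
    by (meson finite_UnI finite_subset)
  moreover have "c p \<noteq> 0 \<or> d p \<noteq> 0" if "a * c p + b * d p \<noteq> 0" for p
    using that by auto
  ultimately show ?thesis
    using assms unfolding S_sub_def IC_def by blast
qed

lemma zero_in_S_sub: "(\<lambda>p. 0) \<in> S_sub le v"
  by (auto simp: S_sub_def IC_def supp_def)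

lemma supp_ebasis: "supp (ebasis x y :: 'a \<times> 'a \<Rightarrow> 'k::field) = {(x, y)}"
  by (auto simp: supp_def ebasis_def)

lemma ebasis_in_S_sub:
  assumes "pre_equiv le y v"
  shows "(ebasis v y :: 'a \<times> 'a \<Rightarrow> 'k::field) \<in> S_sub le v"
proof -
  have "finite (supp (ebasis v y :: 'a \<times> 'a \<Rightarrow> 'k))" by (simp add: supp_ebasis)
  then show ?thesis using assms by (auto simp: S_sub_def IC_def ebasis_def pre_equiv_def)
qed

lemma S_dual_lincomb:
  assumes "f \<in> S_dual le v" "c \<in> S_sub le v" "d \<in> S_sub le v"
  shows "f (\<lambda>p. a * c p + b * d p) = a * f c + b * f d"
  using assms by (simp add: S_dual_def lin_on_def)

lemma S_dual_zero:
  assumes "f \<in> S_dual le v"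
  shows "f (\<lambda>p. 0) = 0"
  using S_dual_lincomb[OF assms zero_in_S_sub zero_in_S_sub, of 0 0] by simp

lemma S_dual_sum_ebasis:
  assumes "f \<in> S_dual le v" "finite F" "\<forall>y\<in>F. pre_equiv le y v"
  shows "(\<lambda>q. \<Sum>y\<in>F. a y * ebasis v y q) \<in> S_sub le v \<and>
         f (\<lambda>q. \<Sum>y\<in>F. a y * ebasis v y q) = (\<Sum>y\<in>F. a y * f (ebasis v y))"
  using assms(2,3)
proof (induction F rule: finite_induct)
  case empty
  then show ?case using zero_in_S_sub S_dual_zero[OF assms(1)] by simp
next
  case (insert x F)
  let ?c = "\<lambda>q. \<Sum>y\<in>F. a y * ebasis v y q"
  have c: "?c \<in> S_sub le v" "f ?c = (\<Sum>y\<in>F. a y * f (ebasis v y))"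
    using insert by auto
  have e: "ebasis v x \<in> S_sub le v" using insert ebasis_in_S_sub by auto
  have "(\<lambda>q. \<Sum>y\<in>insert x F. a y * ebasis v y q) = (\<lambda>p. 1 * ?c p + a x * ebasis v x p)"
    using insert by (auto simp: add.commute)
  then show ?case
    using S_sub_lincomb[OF c(1) e, of 1 "a x"] S_dual_lincomb[OF assms(1) c(1) e, of 1 "a x"]
      c(2) insert by simp
qed

lemma S_sub_eq_sum_ebasis:
  assumes "s \<in> S_sub le v" "finite {y. pre_equiv le y v}"
  shows "s = (\<lambda>q. \<Sum>y\<in>{y. pre_equiv le y v}. s (v, y) * ebasis v y q)"
proof
  fix q :: "'a \<times> 'a"
  obtain a b where q: "q = (a, b)" by fastforce
  show "s q = (\<Sum>y\<in>{y. pre_equiv le y v}. s (v, y) * ebasis v y q)"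
  proof (cases "a = v \<and> pre_equiv le b v")
    case True
    then have "(\<Sum>y\<in>{y. pre_equiv le y v}. s (v, y) * ebasis v y q)
        = (\<Sum>y\<in>{y. pre_equiv le y v}. if y = b then s (v, y) else 0)"
      by (intro sum.cong) (auto simp: ebasis_def q)
    then show ?thesis using True assms(2) q by simp
  next
    case False
    then have "s q = 0" using assms(1) q unfolding S_sub_def by auto
    moreover have "(\<Sum>y\<in>{y. pre_equiv le y v}. s (v, y) * ebasis v y q) = 0"
      using False q by (intro sum.neutral) (auto simp: ebasis_def)
    ultimately show ?thesis by simp
  qed
qed

lemma S_dual_apply:
  assumes "locally_finite_preorder le" "f \<in> S_dual le v" "s \<in> S_sub le v"
  shows "f s = (\<Sum>y\<in>{y. pre_equiv le y v}. s (v, y) * f (ebasis v y))"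
proof -
  have fin: "finite {y. pre_equiv le y v}" by (rule finite_pre_equiv_class[OF assms(1)])
  show ?thesis
    using S_sub_eq_sum_ebasis[OF assms(3) fin] S_dual_sum_ebasis[OF assms(2) fin, of "\<lambda>y. s (v, y)"]
    by simp
qed

lemma left_act_ebasis:
  "left_act le \<phi> (ebasis x y) = (\<lambda>q. \<Sum>u\<in>interval le x y. \<phi> (ebasis u y) * ebasis x u q)"
  unfolding left_act_def supp_ebasis by (simp add: ebasis_def)

lemma right_act_column_apply:
  assumes "locally_finite_preorder le" "finite K"
    and "\<forall>p. c p \<noteq> 0 \<longrightarrow> snd p = v \<and> fst p \<in> K"
  shows "right_act le c \<phi> (z, w) =
    (if w = v then \<Sum>y\<in>{y\<in>K. le y z \<and> le z v}. c (y, v) * \<phi> (ebasis y z) else 0)"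
proof -
  define g where "g p = (\<Sum>u\<in>interval le (fst p) (snd p).
      c p * \<phi> (ebasis (fst p) u) * ebasis u (snd p) (z, w))" for p
  have g_column: "g (y, v) = (if w = v \<and> le y z \<and> le z v then c (y, v) * \<phi> (ebasis y z) else 0)"
    for y
  proof -
    have "finite (interval le y v)"
      using assms(1) by (simp add: locally_finite_preorder_def interval_def)
    moreover have "g (y, v) = (\<Sum>u\<in>interval le y v.
        if u = z then (if w = v then c (y, v) * \<phi> (ebasis y u) else 0) else 0)"
      unfolding g_def by (intro sum.cong) (auto simp: ebasis_def)
    ultimately show ?thesis by (simp add: interval_def)
  qed
  have "right_act le c \<phi> (z, w) = (\<Sum>p\<in>supp c. g p)"
    unfolding right_act_def g_def by simp
  also have "\<dots> = (\<Sum>p\<in>(\<lambda>y. (y, v)) ` K. g p)"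
  proof (rule sum.mono_neutral_left)
    show "finite ((\<lambda>y. (y, v)) ` K)" using assms(2) by simp
    show "supp c \<subseteq> (\<lambda>y. (y, v)) ` K" using assms(3) by (auto simp: supp_def image_iff)
    show "\<forall>p\<in>(\<lambda>y. (y, v)) ` K - supp c. g p = 0" by (auto simp: g_def supp_def)
  qed
  also have "\<dots> = (\<Sum>y\<in>K. g (y, v))"
    by (subst sum.reindex) (auto simp: inj_on_def)
  also have "\<dots> = (if w = v then \<Sum>y\<in>{y\<in>K. le y z \<and> le z v}. c (y, v) * \<phi> (ebasis y z) else 0)"
    using assms(2) by (simp add: g_column sum.inter_filter)
  finally show ?thesis .
qed

definition S_dual_to_S' :: "('a \<Rightarrow> 'a \<Rightarrow> bool) \<Rightarrow> 'a \<Rightarrow> (('a \<times> 'a \<Rightarrow> 'k::field) \<Rightarrow> 'k)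
    \<Rightarrow> ('a \<times> 'a \<Rightarrow> 'k)" where
  "S_dual_to_S' le v f =
     (\<lambda>q. if snd q = v \<and> pre_equiv le (fst q) v then f (ebasis v (fst q)) else 0)"

lemma S_dual_to_S'_nonzero:
  "S_dual_to_S' le v f p \<noteq> 0 \<Longrightarrow> snd p = v \<and> fst p \<in> {y. pre_equiv le y v}"
  by (auto simp: S_dual_to_S'_def split: if_splits)

lemma S_dual_to_S'_in_S'_sub:
  assumes "locally_finite_preorder le"
  shows "S_dual_to_S' le v f \<in> S'_sub le v"
proof -
  have "supp (S_dual_to_S' le v f) \<subseteq> (\<lambda>y. (y, v)) ` {y. pre_equiv le y v}"
    by (auto simp: supp_def image_iff dest: S_dual_to_S'_nonzero)
  then have "finite (supp (S_dual_to_S' le v f))"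
    using finite_pre_equiv_class[OF assms] by (meson finite_imageI finite_subset)
  then show ?thesis
    by (auto simp: S'_sub_def IC_def S_dual_to_S'_def pre_equiv_def split: if_splits)
qed

lemma inj_on_S_dual_to_S':
  assumes "locally_finite_preorder le"
  shows "inj_on (S_dual_to_S' le v) (S_dual le v)"
proof (rule inj_onI, rule ext)
  fix f g s
  assume f: "f \<in> S_dual le v" and g: "g \<in> S_dual le v"
    and eq: "S_dual_to_S' le v f = S_dual_to_S' le v g"
  have "f (ebasis v y) = g (ebasis v y)" if "pre_equiv le y v" for y
    using fun_cong[OF eq, of "(y, v)"] that by (simp add: S_dual_to_S'_def)
  then show "f s = g s"
    using S_dual_apply[OF assms f] S_dual_apply[OF assms g] f g
    by (cases "s \<in> S_sub le v") (simp_all add: S_dual_def)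
qed

lemma S_dual_to_S'_surj:
  fixes c :: "'a \<times> 'a \<Rightarrow> 'k::field"
  assumes "locally_finite_preorder le" "c \<in> S'_sub le v"
  shows "\<exists>f\<in>S_dual le v. S_dual_to_S' le v f = c"
proof -
  let ?K = "{y. pre_equiv le y v}"
  have fin: "finite ?K" by (rule finite_pre_equiv_class[OF assms(1)])
  define f where "f s = (if s \<in> S_sub le v then \<Sum>y\<in>?K. s (v, y) * c (y, v) else 0)" for s
  have "lin_on (S_sub le v) f"
    unfolding lin_on_def
  proof (intro ballI allI)
    fix s t :: "'a \<times> 'a \<Rightarrow> 'k" and a b :: 'k
    assume s: "s \<in> S_sub le v" and t: "t \<in> S_sub le v"
    then show "f (\<lambda>p. a * s p + b * t p) = a * f s + b * f t"
      using S_sub_lincomb[OF s t] by (simp add: f_def sum.distrib sum_distrib_left algebra_simps)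
  qed
  then have f_dual: "f \<in> S_dual le v" by (simp add: S_dual_def f_def)
  have "S_dual_to_S' le v f (z, w) = c (z, w)" for z w
  proof (cases "w = v \<and> pre_equiv le z v")
    case True
    then have "ebasis v z \<in> S_sub le v" by (simp add: ebasis_in_S_sub)
    then have "f (ebasis v z) = (\<Sum>y\<in>?K. ebasis v z (v, y) * c (y, v))"
      unfolding f_def by (rule if_P)
    also have "\<dots> = (\<Sum>y\<in>?K. if y = z then c (y, v) else 0)"
      by (rule sum.cong) (auto simp: ebasis_def)
    finally show ?thesis using True fin by (simp add: S_dual_to_S'_def)
  next
    case False
    then have "c (z, w) = 0" using assms(2) unfolding S'_sub_def by auto
    then show ?thesis using False by (auto simp: S_dual_to_S'_def)
  qed
  then have "S_dual_to_S' le v f = c" by auto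
  then show ?thesis using f_dual by blast
qed

lemma S_dual_to_S'_lincomb:
  "S_dual_to_S' le v (\<lambda>s. a * f s + b * g s) =
     (\<lambda>q. a * S_dual_to_S' le v f q + b * S_dual_to_S' le v g q)"
  by (auto simp: S_dual_to_S'_def)

lemma S_dual_to_S'_right_act:
  assumes "locally_finite_preorder le" "f \<in> S_dual le v"
  shows "S_dual_to_S' le v (dual_right_act le v f \<phi>) = right_act le (S_dual_to_S' le v f) \<phi>"
proof (rule ext, clarify)
  fix z w :: 'a
  let ?K = "{y. pre_equiv le y v}"
  have rhs: "right_act le (S_dual_to_S' le v f) \<phi> (z, w) =
    (if w = v then \<Sum>y\<in>{y\<in>?K. le y z \<and> le z v}. S_dual_to_S' le v f (y, v) * \<phi> (ebasis y z)
     else 0)"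
    by (rule right_act_column_apply[OF assms(1) finite_pre_equiv_class[OF assms(1)]])
      (blast dest: S_dual_to_S'_nonzero)
  show "S_dual_to_S' le v (dual_right_act le v f \<phi>) (z, w) =
        right_act le (S_dual_to_S' le v f) \<phi> (z, w)"
  proof (cases "w = v \<and> pre_equiv le z v")
    case True
    have I: "interval le v z = {y\<in>?K. le y z \<and> le z v}"
      using interval_eq_pre_equiv_class[OF assms(1), of z v] True
      unfolding pre_equiv_def by auto
    have fin: "finite (interval le v z)"
      using I finite_pre_equiv_class[OF assms(1)] by simp
    have in_class: "\<forall>y\<in>interval le v z. pre_equiv le y v"
      using I by simp
    have "dual_right_act le v f \<phi> (ebasis v z) = f (left_act le \<phi> (ebasis v z))"
      unfolding dual_right_act_def using True ebasis_in_S_sub[of le z v] by (intro if_P) simp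
    also have "\<dots> = (\<Sum>u\<in>interval le v z. \<phi> (ebasis u z) * f (ebasis v u))"
      unfolding left_act_ebasis
      using S_dual_sum_ebasis[OF assms(2) fin in_class, of "\<lambda>u. \<phi> (ebasis u z)"] by simp
    also have "\<dots> = (\<Sum>y\<in>{y\<in>?K. le y z \<and> le z v}. S_dual_to_S' le v f (y, v) * \<phi> (ebasis y z))"
      unfolding I by (intro sum.cong) (auto simp: S_dual_to_S'_def mult.commute)
    finally show ?thesis
      using rhs True by (simp add: S_dual_to_S'_def)
  next
    case False
    have "transp le" using assms(1) by (simp add: locally_finite_preorder_def)
    then have empty: "{y\<in>?K. le y z \<and> le z v} = {}" if "w = v"
      using False that unfolding pre_equiv_def by (auto dest: transpD)
    have "right_act le (S_dual_to_S' le v f) \<phi> (z, w) = 0"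
    proof (cases "w = v")
      case True
      show ?thesis unfolding rhs empty[OF True] by simp
    qed (simp add: rhs)
    moreover have "S_dual_to_S' le v (dual_right_act le v f \<phi>) (z, w) = 0"
      using False by (auto simp: S_dual_to_S'_def)
    ultimately show ?thesis by simp
  qed
qed

theorem mainTheorem9:
  fixes le :: "'a \<Rightarrow> 'a \<Rightarrow> bool" and v :: 'a
  assumes "locally_finite_preorder le"
  shows "\<exists>\<Phi> :: (('a \<times> 'a \<Rightarrow> 'k::field) \<Rightarrow> 'k) \<Rightarrow> ('a \<times> 'a \<Rightarrow> 'k).
           bij_betw \<Phi> (S_dual le v) (S'_sub le v)
         \<and> (\<forall>f\<in>S_dual le v. \<forall>g\<in>S_dual le v. \<forall>a b.
              \<Phi> (\<lambda>s. a * f s + b * g s) = (\<lambda>q. a * \<Phi> f q + b * \<Phi> g q))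
         \<and> (\<forall>\<phi>\<in>IC_dual le. \<forall>f\<in>S_dual le v.
              \<Phi> (dual_right_act le v f \<phi>) = right_act le (\<Phi> f) \<phi>)"
proof (intro exI[of _ "S_dual_to_S' le v"] conjI ballI allI)
  show "bij_betw (S_dual_to_S' le v) (S_dual le v) (S'_sub le v)"
    unfolding bij_betw_def
    using inj_on_S_dual_to_S'[OF assms] S_dual_to_S'_in_S'_sub[OF assms]
      S_dual_to_S'_surj[OF assms] by blast
  show "S_dual_to_S' le v (\<lambda>s. a * f s + b * g s) =
      (\<lambda>q. a * S_dual_to_S' le v f q + b * S_dual_to_S' le v g q)" for f g and a b :: 'k
    by (rule S_dual_to_S'_lincomb)
  show "S_dual_to_S' le v (dual_right_act le v f \<phi>) = right_act le (S_dual_to_S' le v f) \<phi>"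
    if "f \<in> S_dual le v" for \<phi> f
    using S_dual_to_S'_right_act[OF assms that] .
qed

end
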